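(* Let $q=2^f$ with $f\ge4$, let $q_0<q$ be a power of $2$ with $\gcd(q-1,q_0^2-1)=1$, and let $u\in\mathscr{U}_{q,q_0}$. Let $\eta$ be a primitive element of $\mathbb{F}_q$ with $u=(1+\eta^{q_0})/(\eta+\eta^{q_0})$, and let $k$ be an integer with $1+\eta=\eta^{k+1}$. Then the subgraph of $\Gamma_u$ induced on the neighborhood $\Omega_u\cup\Omega_{u+1}$ of the identity vertex is isomorphic to the generalized Petersen graph $GPG(q-1,k)$.
   Context: For $a,c\in\mathbb{F}_q$ let $\Phi_{a,c}=\begin{bmatrix}1&0&0\\ a&1&0\\ c&a^{q_0}&1\end{bmatrix}$, $K=\{\Phi_{a,c}: a,c\in\mathbb{F}_q\}\le GL(3,\mathbb{F}_q)$, and for $v\in\mathbb{F}_q$ let $\Omega_v=\{\Phi_{a,va^{q_0+1}}: a\in\mathbb{F}_q^*\}$. $\Gamma_u=\mathrm{Cay}(K,\Omega_u\cup\Omega_{u+1})$ is the graph with vertex set $K$, $x,y$ adjacent iff $xy^{-1}\in\Omega_u\cup\Omega_{u+1}$. $\mathscr{U}_{q,q_0}$ is the set of $u\in\mathbb{F}_q$ such that (U1) $u=(1+\eta^{q_0})/(\eta+\eta^{q_0})$ for some primitive element $\eta$ of $\mathbb{F}_q$, and (U2) $X^{q_0+1}+uX^{q_0}+(u+1)X+1$ has no roots in $\mathbb{F}_q$. For an integer $n\ge3$ and an integer $k$, $GPG(n,k)$ is the graph with vertices $c_1,\dots,c_n,c_1',\dots,c_n'$ and edges $c_ic_{i+1}$,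 $c_ic_i'$, $c_i'c_{i+k}'$ ($i=1,\dots,n$, subscripts modulo $n$). *)

theory Defs
  imports "HOL-Analysis.Analysis"
begin

text \<open>Elements of F_q are modelled by a finite field type 'a (CARD('a) = q).
  3x3 matrices over F_q are elements of type 'a^3^3, with indices 0,1,2.\<close>

definition Phi :: "nat \<Rightarrow> 'a::field \<Rightarrow> 'a \<Rightarrow> 'a^3^3" where
  "Phi q0 a c = (\<chi> i j. if i = j then 1
      else if i = 1 \<and> j = 0 then a
      else if i = 2 \<and> j = 0 then c
      else if i = 2 \<and> j = 1 then a ^ q0
      else 0)"

definition Kgrp :: "nat \<Rightarrow> ('a::field^3^3) set" where
  "Kgrp q0 = {Phi q0 a c | a c. True}"

definition Omega :: "nat \<Rightarrow> 'a::field \<Rightarrow> ('a^3^3) set" where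
  "Omega q0 v = {Phi q0 a (v * a ^ (q0 + 1)) | a. a \<noteq> 0}"

definition Gamma_adj :: "nat \<Rightarrow> 'a::field \<Rightarrow> 'a^3^3 \<Rightarrow> 'a^3^3 \<Rightarrow> bool" where
  "Gamma_adj q0 u x y \<longleftrightarrow> x \<in> Kgrp q0 \<and> y \<in> Kgrp q0 \<and>
      x ** matrix_inv y \<in> Omega q0 u \<union> Omega q0 (u + 1)"

definition primitive_elem :: "'a::field \<Rightarrow> bool" where
  "primitive_elem \<eta> \<longleftrightarrow> \<eta> \<noteq> 0 \<and> (\<forall>x. x \<noteq> 0 \<longrightarrow> (\<exists>n::nat. x = \<eta> ^ n))"

definition Ucal :: "nat \<Rightarrow> 'a::field set" where
  "Ucal q0 = {u. (\<exists>\<eta>. primitive_elem \<eta> \<and> u = (1 + \<eta> ^ q0) / (\<eta> + \<eta> ^ q0))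
               \<and> (\<forall>X. X ^ (q0 + 1) + u * X ^ q0 + (u + 1) * X + 1 \<noteq> 0)}"

text \<open>Generalized Petersen graph GPG(n,k): vertex (False,i) is c_(i+1), (True,i) is c'_(i+1),
  for i \<in> {0..<n}; subscripts modulo n.\<close>
definition GPG_verts :: "nat \<Rightarrow> (bool \<times> int) set" where
  "GPG_verts n = UNIV \<times> {0..<int n}"

definition GPG_edge :: "nat \<Rightarrow> int \<Rightarrow> (bool \<times> int) \<Rightarrow> (bool \<times> int) \<Rightarrow> bool" where
  "GPG_edge n k v w \<longleftrightarrow> (\<exists>i\<in>{0..<int n}.
      (v = (False, i) \<and> w = (False, (i + 1) mod int n)) \<or>
      (v = (False, i) \<and> w = (True, i)) \<or>
      (v = (True, i) \<and> w = (True, (i + k) mod int n)))"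

definition GPG_adj :: "nat \<Rightarrow> int \<Rightarrow> (bool \<times> int) \<Rightarrow> (bool \<times> int) \<Rightarrow> bool" where
  "GPG_adj n k v w \<longleftrightarrow> GPG_edge n k v w \<or> GPG_edge n k w v"

definition graph_iso :: "'v set \<Rightarrow> ('v \<Rightarrow> 'v \<Rightarrow> bool) \<Rightarrow> 'w set \<Rightarrow> ('w \<Rightarrow> 'w \<Rightarrow> bool) \<Rightarrow> bool" where
  "graph_iso V E W F \<longleftrightarrow> (\<exists>\<phi>. bij_betw \<phi> V W \<and>
      (\<forall>x\<in>V. \<forall>y\<in>V. E x y \<longleftrightarrow> F (\<phi> x) (\<phi> y)))"

end

(*
  In characteristic 2 the map x -> x^q0 is additive, and adjacency of two neighbours
  amounts to the vanishing of the binary form a^(q0+1) + v a^q0 b + (v+1) a b^q0 at (a, b) or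
  (a, a+b), or of the form of condition (U2), which never vanishes.  If v = alpha^q0/(alpha + alpha^q0),
  then (alpha + alpha^q0) times this form equals (alpha a)^q0 (a+b) + (alpha a) (a+b)^q0, and since
  x -> x^(q0-1) is injective on the nonzero elements when gcd(q-1, q0-1) = 1, it vanishes only for
  b = a or a + b = alpha a.  Here alpha = 1 + eta for v = u and alpha = 1/(1 + eta) for v = u+1.
  Consequently the neighbours eta^i of the first kind form the outer cycle, the neighbours
  eta^(i-k-1) of the second kind form the inner cycle of step k (as 1 + eta = eta^(k+1)), and the
  two with the same i are joined by a spoke.
*)

theory Submission
  imports Defs "HOL-Computational_Algebra.Primes" "HOL-Number_Theory.Residues"
begin

lemma CHAR_eq_2_if_card_eq_power_2:
  assumes "CARD('a::{field,finite}) = 2 ^ f"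
  shows "CHAR('a) = 2"
proof -
  have prime: "prime CHAR('a)"
    by (rule prime_CHAR_semidom) (simp add: finite_imp_CHAR_pos)
  moreover have "CHAR('a) dvd 2 ^ f"
    using CHAR_dvd_CARD[where 'a = 'a] assms by simp
  ultimately have "CHAR('a) dvd 2"
    by (rule prime_dvd_power)
  with prime show ?thesis
    by (simp add: primes_dvd_imp_eq)
qed

lemma two_eq_zero_if_CHAR_2: "CHAR('a::semiring_1) = 2 \<Longrightarrow> (2::'a) = 0"
  using of_nat_CHAR[where 'a = 'a] by simp

lemma add_eq_0_iff_eq_if_CHAR_2:
  fixes x y :: "'a::ring_1"
  assumes "CHAR('a) = 2"
  shows "x + y = 0 \<longleftrightarrow> x = y"
  using uminus_CHAR_2[OF assms, of y] by (auto simp: add_eq_0_iff2)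

lemma Frobenius_additive_if_CHAR_2:
  fixes x y :: "'a::comm_semiring_1"
  assumes "CHAR('a) = 2"
  shows "(x + y) ^ (2 ^ e) = x ^ (2 ^ e) + y ^ (2 ^ e)"
  using assms by (intro freshmans_dream') simp_all

lemma field_power_card_minus_1:
  fixes x :: "'a::{field,finite}"
  assumes "x \<noteq> 0"
  shows "x ^ (CARD('a) - 1) = 1"
proof -
  have "(\<Prod>y\<in>UNIV-{0}. x * y) = (\<Prod>y\<in>UNIV-{0::'a}. y)"
    by (rule prod.reindex_bij_witness[of _ "\<lambda>y. y / x" "\<lambda>y. x * y"]) (use assms in auto)
  moreover have "(\<Prod>y\<in>UNIV-{0}. x * y) = x ^ card (UNIV-{0::'a}) * (\<Prod>y\<in>UNIV-{0::'a}. y)"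
    by (simp add: prod.distrib)
  moreover have "(\<Prod>y\<in>UNIV-{0::'a}. y) \<noteq> 0"
    by simp
  ultimately show ?thesis
    by (simp add: card_Diff_singleton)
qed

lemma CARD_field_ge_2: "CARD('a::{field,finite}) \<ge> 2"
proof -
  have "card {0::'a, 1} \<le> CARD('a)"
    by (rule card_mono) simp_all
  then show ?thesis
    by simp
qed

lemma power_eq_power_imp_eq_if_coprime_card:
  fixes x y :: "'a::{field,finite}"
  assumes "coprime (CARD('a) - 1) m" and "x \<noteq> 0" "y \<noteq> 0" and "x ^ m = y ^ m"
  shows "x = y"
proof -
  define z where "z = x / y"
  have z_nonzero: "z \<noteq> 0" and "z ^ m = 1"
    using assms(2-4) by (simp_all add: z_def power_divide)
  have "CARD('a) - 1 \<noteq> 0"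
    using CARD_field_ge_2[where 'a = 'a] by simp
  then obtain s t where st: "(CARD('a) - 1) * s = m * t + 1"
    using bezout_nat[of "CARD('a) - 1" m] assms(1) by auto
  have "1 = (z ^ (CARD('a) - 1)) ^ s"
    using field_power_card_minus_1[OF z_nonzero] by simp
  also have "\<dots> = (z ^ m) ^ t * z"
    unfolding power_mult[symmetric] st by (simp add: power_mult)
  finally have "z = 1"
    using \<open>z ^ m = 1\<close> by simp
  then show ?thesis
    using assms(3) by (simp add: z_def)
qed

lemma power_mult_eq_power_mult_swap_iff:
  fixes x y :: "'a::{field,finite}"
  assumes "coprime (CARD('a) - 1) (m - 1)" and "m > 0"
  shows "x ^ m * y = y ^ m * x \<longleftrightarrow> x = 0 \<or> y = 0 \<or> x = y"
proof (cases "x = 0 \<or> y = 0")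
  case False
  have "x ^ m * y = y ^ m * x \<longleftrightarrow> x ^ (m - 1) * (x * y) = y ^ (m - 1) * (x * y)"
    using \<open>m > 0\<close> by (simp add: ac_simps flip: power_minus_mult)
  also have "\<dots> \<longleftrightarrow> x ^ (m - 1) = y ^ (m - 1)"
    using False by simp
  also have "\<dots> \<longleftrightarrow> x = y"
    using power_eq_power_imp_eq_if_coprime_card[OF assms(1)] False by blast
  finally show ?thesis
    using False by simp
qed (use \<open>m > 0\<close> in auto)

lemma power_eq_power_mod_if_power_eq_1:
  fixes x :: "'a::monoid_mult"
  assumes "x ^ r = 1"
  shows "x ^ m = x ^ (m mod r)"
proof -
  have "x ^ m = (x ^ r) ^ (m div r) * x ^ (m mod r)"
    by (simp flip: power_mult power_add)
  then show ?thesis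
    using assms by simp
qed

lemma primitive_elem_nonzero: "primitive_elem \<eta> \<Longrightarrow> \<eta> \<noteq> 0"
  unfolding primitive_elem_def by blast

lemma primitive_elem_power_eq_1_iff:
  fixes \<eta> :: "'a::{field,finite}"
  assumes "primitive_elem \<eta>"
  shows "\<eta> ^ m = 1 \<longleftrightarrow> (CARD('a) - 1) dvd m"
proof
  assume "(CARD('a) - 1) dvd m"
  then show "\<eta> ^ m = 1"
    using field_power_card_minus_1[OF primitive_elem_nonzero[OF assms]] by (auto simp: power_mult)
next
  assume "\<eta> ^ m = 1"
  define r where "r = m mod (CARD('a) - 1)"
  have "\<eta> ^ r = 1"
    using \<open>\<eta> ^ m = 1\<close> power_eq_power_mod_if_power_eq_1[of \<eta> "CARD('a) - 1" m]
      field_power_card_minus_1[OF primitive_elem_nonzero[OF assms]]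
    by (simp add: r_def)
  have "r = 0"
  proof (rule ccontr)
    assume "r \<noteq> 0"
    have "UNIV - {0} \<subseteq> (\<lambda>l. \<eta> ^ l) ` {..<r}"
    proof
      fix x :: 'a
      assume "x \<in> UNIV - {0}"
      then obtain l where "x = \<eta> ^ l"
        using assms unfolding primitive_elem_def by blast
      then have "x = \<eta> ^ (l mod r)"
        using power_eq_power_mod_if_power_eq_1[OF \<open>\<eta> ^ r = 1\<close>] by simp
      then show "x \<in> (\<lambda>l. \<eta> ^ l) ` {..<r}"
        using \<open>r \<noteq> 0\<close> by auto
    qed
    then have "CARD('a) - 1 \<le> r"
      using surj_card_le[OF finite_lessThan] by (metis card_Diff_singleton card_lessThan finite UNIV_I)
    moreover have "r < CARD('a) - 1"
      using CARD_field_ge_2[where 'a = 'a] by (simp add: r_def)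
    ultimately show False
      by simp
  qed
  then show "(CARD('a) - 1) dvd m"
    by (simp add: r_def mod_eq_0_iff_dvd)
qed

lemma primitive_elem_power_int_eq_1_iff:
  fixes \<eta> :: "'a::{field,finite}"
  assumes "primitive_elem \<eta>"
  shows "\<eta> powi d = 1 \<longleftrightarrow> int (CARD('a) - 1) dvd d"
proof -
  define n where "n = CARD('a) - 1"
  have "\<eta> ^ m = 1 \<longleftrightarrow> n dvd m" for m
    unfolding n_def by (rule primitive_elem_power_eq_1_iff[OF assms])
  then show ?thesis
    unfolding n_def[symmetric]
    by (cases d rule: int_cases2) (simp_all add: power_int_minus power_int_of_nat)
qed

lemma primitive_elem_power_int_eq_iff:
  fixes \<eta> :: "'a::{field,finite}"
  assumes "primitive_elem \<eta>"
  shows "\<eta> powi i = \<eta> powi j \<longleftrightarrow> i mod int (CARD('a) - 1) = j mod int (CARD('a) - 1)"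
proof -
  have "\<eta> powi i = \<eta> powi j \<longleftrightarrow> \<eta> powi (i - j) = 1"
    using primitive_elem_nonzero[OF assms] by (simp add: power_int_diff)
  then show ?thesis
    by (simp add: primitive_elem_power_int_eq_1_iff[OF assms] mod_eq_dvd_iff)
qed

section \<open>A binary form in characteristic 2\<close>

lemma add_mult_eq_imp_succ_mult_eq_if_CHAR_2:
  fixes v x y :: "'a::comm_ring_1"
  assumes "CHAR('a) = 2" and "v * (x + y) = y"
  shows "(v + 1) * (x + y) = x"
proof -
  have "(v + 1) * (x + y) = x + 2 * y"
    using assms(2) by (simp add: algebra_simps)
  then show ?thesis
    by (simp add: two_eq_zero_if_CHAR_2[OF assms(1)])
qed

lemma Frobenius_form_eq_0_iff:
  fixes a b \<alpha> v :: "'a::{field,finite}"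
  assumes "CHAR('a) = 2" and "q = 2 ^ e" and "coprime (CARD('a) - 1) (q - 1)"
    and "\<alpha> \<noteq> 0" and "v * (\<alpha> + \<alpha> ^ q) = \<alpha> ^ q" and "a \<noteq> 0"
  shows "a ^ (q + 1) + v * a ^ q * b + (v + 1) * a * b ^ q = 0 \<longleftrightarrow> b = a \<or> a + b = \<alpha> * a"
proof -
  define \<delta> where "\<delta> = \<alpha> + \<alpha> ^ q"
  have "\<delta> \<noteq> 0"
    using assms(4,5) by (auto simp: \<delta>_def)
  have v: "v * \<delta> = \<alpha> ^ q" and v_succ: "(v + 1) * \<delta> = \<alpha>"
    using assms(5) add_mult_eq_imp_succ_mult_eq_if_CHAR_2[OF assms(1,5)] by (simp_all add: \<delta>_def)
  have Frobenius: "(a + b) ^ q = a ^ q + b ^ q"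
    using Frobenius_additive_if_CHAR_2[OF assms(1)] assms(2) by simp
  have "\<delta> * (a ^ (q + 1) + v * a ^ q * b + (v + 1) * a * b ^ q)
      = \<delta> * a ^ (q + 1) + (v * \<delta>) * a ^ q * b + ((v + 1) * \<delta>) * a * b ^ q"
    by (simp add: algebra_simps)
  also have "\<dots> = (\<alpha> * a) ^ q * (a + b) + (a + b) ^ q * (\<alpha> * a)"
    unfolding v v_succ unfolding Frobenius \<delta>_def by (simp add: algebra_simps power_mult_distrib)
  finally have "a ^ (q + 1) + v * a ^ q * b + (v + 1) * a * b ^ q = 0
      \<longleftrightarrow> (\<alpha> * a) ^ q * (a + b) = (a + b) ^ q * (\<alpha> * a)"
    using \<open>\<delta> \<noteq> 0\<close> add_eq_0_iff_eq_if_CHAR_2[OF assms(1)] by (metis mult_eq_0_iff)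
  also have "\<dots> \<longleftrightarrow> a + b = 0 \<or> a + b = \<alpha> * a"
    using power_mult_eq_power_mult_swap_iff[OF assms(3)] assms(2,4,6) by auto
  finally show ?thesis
    using add_eq_0_iff_eq_if_CHAR_2[OF assms(1)] by auto
qed

lemma Frobenius_form_parameter_inverse:
  fixes \<alpha> v :: "'a::field"
  assumes "CHAR('a) = 2" and "\<alpha> \<noteq> 0" and "v * (\<alpha> + \<alpha> ^ q) = \<alpha> ^ q"
  shows "(v + 1) * (inverse \<alpha> + inverse \<alpha> ^ q) = inverse \<alpha> ^ q"
proof -
  have "inverse \<alpha> + inverse \<alpha> ^ q = (\<alpha> + \<alpha> ^ q) / (\<alpha> * \<alpha> ^ q)"
    using assms(2) by (simp add: field_simps)
  then show ?thesis
    using add_mult_eq_imp_succ_mult_eq_if_CHAR_2[OF assms(1,3)] assms(2)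
    by (simp add: field_simps power_inverse)
qed

lemma Phi_eq_Phi_iff: "(Phi q0 a c :: 'a::field^3^3) = Phi q0 a' c' \<longleftrightarrow> a = a' \<and> c = c'"
proof
  assume eq: "(Phi q0 a c :: 'a^3^3) = Phi q0 a' c'"
  show "a = a' \<and> c = c'"
    using arg_cong[OF eq, of "\<lambda>M. M $ 1 $ 0"] arg_cong[OF eq, of "\<lambda>M. M $ 2 $ 0"]
    by (simp add: Phi_def)
qed simp

lemma Phi_in_Kgrp: "Phi q0 a c \<in> Kgrp q0"
  unfolding Kgrp_def by blast

lemma Phi_in_Omega_iff: "Phi q0 a c \<in> Omega q0 t \<longleftrightarrow> a \<noteq> 0 \<and> c = t * a ^ (q0 + 1)"
  unfolding Omega_def by (auto simp: Phi_eq_Phi_iff)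

lemma Phi_mult_Phi:
  fixes a b c d :: "'a::field"
  assumes "(a + b) ^ q0 = a ^ q0 + b ^ q0"
  shows "Phi q0 a c ** Phi q0 b d = Phi q0 (a + b) (c + a ^ q0 * b + d)"
  unfolding vec_eq_iff matrix_matrix_mult_def Phi_def
  using assms by (simp add: forall_3 sum_3 algebra_simps)

lemma matrix_inv_unique:
  fixes A B :: "'a::semiring_1^'n^'n"
  assumes "A ** B = mat 1" and "B ** A = mat 1"
  shows "matrix_inv A = B"
  unfolding matrix_inv_def
proof (rule some_equality)
  fix C
  assume "A ** C = mat 1 \<and> C ** A = mat 1"
  then have "C = C ** (A ** B)" and "C ** A = mat 1"
    using assms by simp_all
  then show "C = B"
    by (simp add: matrix_mul_assoc)
qed (use assms in simp)

lemma matrix_inv_Phi: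
  fixes b d :: "'a::field"
  assumes "CHAR('a) = 2" and "q0 > 0"
  shows "matrix_inv (Phi q0 b d) = Phi q0 b (d + b ^ (q0 + 1))"
proof (rule matrix_inv_unique)
  have two: "(2::'a) = 0"
    using assms(1) by (rule two_eq_zero_if_CHAR_2)
  have b_plus_b: "b + b = 0"
    by (simp add: two flip: mult_2)
  have identity: "Phi q0 0 0 = (mat 1 :: 'a^3^3)"
    using assms(2) unfolding Phi_def mat_def vec_eq_iff by simp
  have "(b + b) ^ q0 = b ^ q0 + b ^ q0"
    using assms(2) by (simp add: two flip: mult_2)
  note product = Phi_mult_Phi[OF this]
  have "d + b ^ q0 * b + (d + b ^ (q0 + 1)) = 2 * (d + b ^ (q0 + 1))"
    and "d + b ^ (q0 + 1) + b ^ q0 * b + d = 2 * (d + b ^ (q0 + 1))"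
    by (simp_all add: algebra_simps)
  then show "Phi q0 b d ** Phi q0 b (d + b ^ (q0 + 1)) = mat 1"
    and "Phi q0 b (d + b ^ (q0 + 1)) ** Phi q0 b d = mat 1"
    unfolding product b_plus_b two identity[symmetric] by simp_all
qed

lemma Gamma_adj_Phi_iff:
  fixes a b c d u :: "'a::field"
  assumes "CHAR('a) = 2" and "q0 = 2 ^ e"
  shows "Gamma_adj q0 u (Phi q0 a c) (Phi q0 b d) \<longleftrightarrow> a \<noteq> b \<and>
    (\<exists>t\<in>{u, u + 1}. c + a ^ q0 * b + d + b ^ (q0 + 1) = t * (a + b) ^ (q0 + 1))"
proof -
  have "Phi q0 a c ** matrix_inv (Phi q0 b d) = Phi q0 (a + b) (c + a ^ q0 * b + (d + b ^ (q0 + 1)))"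
    using assms Frobenius_additive_if_CHAR_2[OF assms(1)]
    by (simp add: matrix_inv_Phi Phi_mult_Phi)
  moreover have "a + b \<noteq> 0 \<longleftrightarrow> a \<noteq> b"
    using add_eq_0_iff_eq_if_CHAR_2[OF assms(1)] by simp
  ultimately show ?thesis
    unfolding Gamma_adj_def by (auto simp: Phi_in_Kgrp Phi_in_Omega_iff add.assoc)
qed

lemma eq_mod_iff_dvd_diff:
  fixes x y n :: int
  assumes "x \<in> {0..<n}"
  shows "x = y mod n \<longleftrightarrow> n dvd x - y"
proof -
  have "x mod n = x"
    using assms by (simp add: mod_pos_pos_trivial)
  then show ?thesis
    using mod_eq_dvd_iff[of x n y] by simp
qed

lemma GPG_adj_iff:
  assumes "i \<in> {0..<int n}" and "j \<in> {0..<int n}"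
  shows "GPG_adj n k (False, i) (False, j) \<longleftrightarrow> j = (i + 1) mod int n \<or> i = (j + 1) mod int n"
    and "GPG_adj n k (True, i) (True, j) \<longleftrightarrow> j = (i + k) mod int n \<or> i = (j + k) mod int n"
    and "GPG_adj n k (False, i) (True, j) \<longleftrightarrow> i = j"
    and "GPG_adj n k (True, i) (False, j) \<longleftrightarrow> i = j"
  using assms by (auto simp: GPG_adj_def GPG_edge_def)

lemma graph_isoI_inverse:
  assumes "bij_betw g W V" and "\<And>x y. x \<in> W \<Longrightarrow> y \<in> W \<Longrightarrow> E (g x) (g y) \<longleftrightarrow> F x y"
  shows "graph_iso V E W F"
  unfolding graph_iso_def
proof (intro exI conjI ballI)
  show "bij_betw (inv_into W g) V W"
    using assms(1) by (rule bij_betw_inv_into)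
  fix x y
  assume "x \<in> V" and "y \<in> V"
  then have "x = g (inv_into W g x)" and "y = g (inv_into W g y)"
    and "inv_into W g x \<in> W" and "inv_into W g y \<in> W"
    using assms(1) by (auto simp: bij_betw_def f_inv_into_f inv_into_into)
  then show "E x y \<longleftrightarrow> F (inv_into W g x) (inv_into W g y)"
    using assms(2) by metis
qed

section \<open>Adjacency among the neighbours of the identity\<close>

locale Gamma_neighbourhood =
  fixes q0 e :: nat and u \<eta> :: "'a::{field,finite}"
  assumes CHAR_2: "CHAR('a) = 2" and q0_eq: "q0 = 2 ^ e"
    and coprime_q0: "coprime (CARD('a) - 1) (q0 - 1)"
    and eta_nonzero: "\<eta> \<noteq> 0" and eta_neq_1: "\<eta> \<noteq> 1"
    and u_eq: "u = (1 + \<eta> ^ q0) / (\<eta> + \<eta> ^ q0)"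
    and no_root: "\<And>X. X ^ (q0 + 1) + u * X ^ q0 + (u + 1) * X + 1 \<noteq> 0"
begin

abbreviation Omega_elem :: "'a \<Rightarrow> 'a \<Rightarrow> 'a^3^3" where
  "Omega_elem t a \<equiv> Phi q0 a (t * a ^ (q0 + 1))"

lemma Omega_elem_in_Omega: "a \<noteq> 0 \<Longrightarrow> Omega_elem t a \<in> Omega q0 t"
  unfolding Omega_def by blast

lemma Omega_elem_eq_iff:
  assumes "a \<noteq> 0"
  shows "Omega_elem t a = Omega_elem t' a' \<longleftrightarrow> t = t' \<and> a = a'"
  using assms by (auto simp: Phi_eq_Phi_iff)

lemma two_eq_zero: "(2::'a) = 0"
  using CHAR_2 by (rule two_eq_zero_if_CHAR_2)

lemma add_eq_0_iff_eq: "x + y = 0 \<longleftrightarrow> x = (y::'a)"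
  using CHAR_2 by (rule add_eq_0_iff_eq_if_CHAR_2)

lemma Frobenius: "(x + y) ^ q0 = x ^ q0 + (y::'a) ^ q0"
  unfolding q0_eq using CHAR_2 by (rule Frobenius_additive_if_CHAR_2)

lemma one_plus_eta_nonzero: "1 + \<eta> \<noteq> 0"
  using eta_neq_1 by (simp add: add_eq_0_iff_eq)

lemma u_parameter: "u * ((1 + \<eta>) + (1 + \<eta>) ^ q0) = (1 + \<eta>) ^ q0"
proof -
  have "\<eta> + \<eta> ^ q0 \<noteq> 0"
  proof
    assume "\<eta> + \<eta> ^ q0 = 0"
    then have "\<eta> ^ (q0 - 1) * \<eta> = 1 ^ (q0 - 1) * \<eta>"
      using power_minus_mult[of q0 \<eta>] q0_eq by (simp add: add_eq_0_iff_eq)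
    then have "\<eta> = 1"
      using power_eq_power_imp_eq_if_coprime_card[OF coprime_q0] eta_nonzero by simp
    with eta_neq_1 show False ..
  qed
  moreover have "(1 + \<eta>) + (1 + \<eta>) ^ q0 = \<eta> + \<eta> ^ q0"
    by (simp add: Frobenius algebra_simps two_eq_zero flip: mult_2)
  ultimately show ?thesis
    by (simp add: u_eq Frobenius)
qed

lemma u_succ_parameter:
  "(u + 1) * (inverse (1 + \<eta>) + inverse (1 + \<eta>) ^ q0) = inverse (1 + \<eta>) ^ q0"
  using CHAR_2 one_plus_eta_nonzero u_parameter by (rule Frobenius_form_parameter_inverse)

lemma Frobenius_form_u_eq_0_iff:
  assumes "a \<noteq> 0"
  shows "a ^ (q0 + 1) + u * a ^ q0 * b + (u + 1) * a * b ^ q0 = 0 \<longleftrightarrow> b = a \<or> b = \<eta> * a"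
proof -
  have "a + b = (1 + \<eta>) * a \<longleftrightarrow> b = \<eta> * a"
    by (simp add: distrib_right)
  then show ?thesis
    using Frobenius_form_eq_0_iff[OF CHAR_2 q0_eq coprime_q0 one_plus_eta_nonzero u_parameter assms,
        of b]
    by simp
qed

lemma Frobenius_form_u_succ_eq_0_iff:
  assumes "a \<noteq> 0"
  shows "a ^ (q0 + 1) + (u + 1) * a ^ q0 * b + u * a * b ^ q0 = 0 \<longleftrightarrow>
    b = a \<or> (1 + \<eta>) * b = \<eta> * a"
proof -
  have succ_succ: "u + 1 + 1 = u"
    using two_eq_zero by (simp add: add.assoc)
  have "inverse (1 + \<eta>) \<noteq> 0"
    using one_plus_eta_nonzero by simp
  from Frobenius_form_eq_0_iff[OF CHAR_2 q0_eq coprime_q0 this u_succ_parameter assms, of b]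
  have "a ^ (q0 + 1) + (u + 1) * a ^ q0 * b + u * a * b ^ q0 = 0 \<longleftrightarrow>
    b = a \<or> a + b = inverse (1 + \<eta>) * a"
    unfolding succ_succ .
  also have "a + b = inverse (1 + \<eta>) * a \<longleftrightarrow> (1 + \<eta>) * (a + b) = a"
    using one_plus_eta_nonzero by (auto simp: nonzero_eq_divide_eq inverse_eq_divide ac_simps)
  also have "(1 + \<eta>) * (a + b) = a + (\<eta> * a + (1 + \<eta>) * b)"
    by (simp add: algebra_simps)
  also have "a + (\<eta> * a + (1 + \<eta>) * b) = a \<longleftrightarrow> (1 + \<eta>) * b = \<eta> * a"
    unfolding add_cancel_left_right add_eq_0_iff_eq by (rule eq_commute)
  finally show ?thesis .
qed

lemma Frobenius_form_plus_power_nonzero: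
  assumes "a \<noteq> 0" and "b \<noteq> 0"
  shows "a ^ (q0 + 1) + u * a ^ q0 * b + (u + 1) * a * b ^ q0 + b ^ (q0 + 1) \<noteq> 0"
proof -
  define X where "X = a / b"
  then have a: "a = X * b"
    using assms(2) by simp
  have "a ^ (q0 + 1) + u * a ^ q0 * b + (u + 1) * a * b ^ q0 + b ^ (q0 + 1)
      = b ^ (q0 + 1) * (X ^ (q0 + 1) + u * X ^ q0 + (u + 1) * X + 1)"
    unfolding a by (simp add: power_mult_distrib power_add algebra_simps)
  then show ?thesis
    using assms(2) no_root[of X] by simp
qed

lemma Gamma_adj_Omega_elem_iff:
  "Gamma_adj q0 u (Omega_elem v a) (Omega_elem w b) \<longleftrightarrow> a \<noteq> b \<and> (\<exists>t\<in>{u, u + 1}.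
     (v + t) * a ^ (q0 + 1) + (t + 1) * a ^ q0 * b + t * a * b ^ q0 + (w + t + 1) * b ^ (q0 + 1) = 0)"
proof -
  have expand: "(a + b) ^ (q0 + 1) = a ^ (q0 + 1) + a ^ q0 * b + a * b ^ q0 + b ^ (q0 + 1)"
    by (simp add: Frobenius algebra_simps)
  have "v * a ^ (q0 + 1) + a ^ q0 * b + w * b ^ (q0 + 1) + b ^ (q0 + 1) = t * (a + b) ^ (q0 + 1)
    \<longleftrightarrow> (v + t) * a ^ (q0 + 1) + (t + 1) * a ^ q0 * b + t * a * b ^ q0 + (w + t + 1) * b ^ (q0 + 1) = 0"
    for t
  proof -
    have "v * a ^ (q0 + 1) + a ^ q0 * b + w * b ^ (q0 + 1) + b ^ (q0 + 1) + t * (a + b) ^ (q0 + 1)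
      = (v + t) * a ^ (q0 + 1) + (t + 1) * a ^ q0 * b + t * a * b ^ q0 + (w + t + 1) * b ^ (q0 + 1)"
      unfolding expand by (simp add: algebra_simps)
    then show ?thesis
      using add_eq_0_iff_eq by metis
  qed
  then show ?thesis
    by (simp add: Gamma_adj_Phi_iff[OF CHAR_2 q0_eq])
qed

lemma Gamma_adj_u_u_iff:
  assumes "a \<noteq> 0" and "b \<noteq> 0"
  shows "Gamma_adj q0 u (Omega_elem u a) (Omega_elem u b) \<longleftrightarrow> b = \<eta> * a \<or> a = \<eta> * b"
proof -
  have "Gamma_adj q0 u (Omega_elem u a) (Omega_elem u b) \<longleftrightarrow> a \<noteq> b \<and>
     (b ^ (q0 + 1) + u * b ^ q0 * a + (u + 1) * b * a ^ q0 = 0 \<or>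
      a ^ (q0 + 1) + u * a ^ q0 * b + (u + 1) * a * b ^ q0 = 0)"
    unfolding Gamma_adj_Omega_elem_iff using two_eq_zero by (simp add: algebra_simps)
  also have "\<dots> \<longleftrightarrow> a \<noteq> b \<and> ((a = b \<or> a = \<eta> * b) \<or> (b = a \<or> b = \<eta> * a))"
    unfolding Frobenius_form_u_eq_0_iff[OF assms(2)] Frobenius_form_u_eq_0_iff[OF assms(1)] ..
  also have "\<dots> \<longleftrightarrow> b = \<eta> * a \<or> a = \<eta> * b"
    using assms eta_neq_1 by auto
  finally show ?thesis .
qed

lemma Gamma_adj_u_u_succ_iff:
  assumes "a \<noteq> 0" and "b \<noteq> 0"
  shows "Gamma_adj q0 u (Omega_elem u a) (Omega_elem (u + 1) b) \<longleftrightarrow> a = (1 + \<eta>) * b"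
proof -
  have "Gamma_adj q0 u (Omega_elem u a) (Omega_elem (u + 1) b) \<longleftrightarrow> a \<noteq> b \<and>
     (a ^ (q0 + 1) + (u + 1) * a ^ q0 * (a + b) + u * a * (a + b) ^ q0 = 0 \<or>
      a ^ (q0 + 1) + u * a ^ q0 * b + (u + 1) * a * b ^ q0 + b ^ (q0 + 1) = 0)"
    unfolding Gamma_adj_Omega_elem_iff Frobenius using two_eq_zero by (simp add: algebra_simps)
  also have "\<dots> \<longleftrightarrow> a \<noteq> b \<and> (a + b = a \<or> (1 + \<eta>) * (a + b) = \<eta> * a)"
    unfolding Frobenius_form_u_succ_eq_0_iff[OF assms(1)]
    using Frobenius_form_plus_power_nonzero[OF assms] by simp
  also have "(1 + \<eta>) * (a + b) = \<eta> * a \<longleftrightarrow> a = (1 + \<eta>) * b"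
    using add_eq_0_iff_eq[of a "(1 + \<eta>) * b"] by (auto simp: algebra_simps)
  finally show ?thesis
    using assms eta_nonzero by auto
qed

lemma Gamma_adj_u_succ_u_iff:
  assumes "a \<noteq> 0" and "b \<noteq> 0"
  shows "Gamma_adj q0 u (Omega_elem (u + 1) a) (Omega_elem u b) \<longleftrightarrow> b = (1 + \<eta>) * a"
proof -
  have "Gamma_adj q0 u (Omega_elem (u + 1) a) (Omega_elem u b) \<longleftrightarrow> a \<noteq> b \<and>
     (b ^ (q0 + 1) + u * b ^ q0 * a + (u + 1) * b * a ^ q0 + a ^ (q0 + 1) = 0 \<or>
      a ^ (q0 + 1) + u * a ^ q0 * (a + b) + (u + 1) * a * (a + b) ^ q0 = 0)"
    unfolding Gamma_adj_Omega_elem_iff Frobenius using two_eq_zero by (simp add: algebra_simps)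
  also have "\<dots> \<longleftrightarrow> a \<noteq> b \<and> (a + b = a \<or> a + b = \<eta> * a)"
    unfolding Frobenius_form_u_eq_0_iff[OF assms(1)]
    using Frobenius_form_plus_power_nonzero[OF assms(2,1)] by simp
  also have "a + b = \<eta> * a \<longleftrightarrow> b = (1 + \<eta>) * a"
    unfolding add_eq_0_iff_eq[of "a + b", symmetric] add_eq_0_iff_eq[of b, symmetric]
    by (simp add: algebra_simps)
  finally show ?thesis
    using assms eta_nonzero by auto
qed

lemma Gamma_adj_u_succ_u_succ_iff:
  assumes "a \<noteq> 0" and "b \<noteq> 0"
  shows "Gamma_adj q0 u (Omega_elem (u + 1) a) (Omega_elem (u + 1) b) \<longleftrightarrow>
    (1 + \<eta>) * b = \<eta> * a \<or> (1 + \<eta>) * a = \<eta> * b"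
proof -
  have "Gamma_adj q0 u (Omega_elem (u + 1) a) (Omega_elem (u + 1) b) \<longleftrightarrow> a \<noteq> b \<and>
     (a ^ (q0 + 1) + (u + 1) * a ^ q0 * b + u * a * b ^ q0 = 0 \<or>
      b ^ (q0 + 1) + (u + 1) * b ^ q0 * a + u * b * a ^ q0 = 0)"
    unfolding Gamma_adj_Omega_elem_iff using two_eq_zero by (simp add: algebra_simps)
  also have "\<dots> \<longleftrightarrow> a \<noteq> b \<and> ((b = a \<or> (1 + \<eta>) * b = \<eta> * a) \<or> (a = b \<or> (1 + \<eta>) * a = \<eta> * b))"
    unfolding Frobenius_form_u_succ_eq_0_iff[OF assms(1)] Frobenius_form_u_succ_eq_0_iff[OF assms(2)] ..
  also have "\<dots> \<longleftrightarrow> (1 + \<eta>) * b = \<eta> * a \<or> (1 + \<eta>) * a = \<eta> * b"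
    using assms by (auto simp: algebra_simps)
  finally show ?thesis .
qed

end

section \<open>The isomorphism with the generalized Petersen graph\<close>

locale Gamma_GPG = Gamma_neighbourhood q0 e u \<eta>
  for q0 e :: nat and u \<eta> :: "'a::{field,finite}" +
  fixes k :: int and n :: nat
  assumes primitive: "primitive_elem \<eta>" and one_plus_eta: "1 + \<eta> = \<eta> powi (k + 1)"
    and n_eq: "n = CARD('a) - 1"
begin

text \<open>The inner vertex with index \<open>i\<close> is sent to parameter \<open>a = \<eta> powi (i - (k + 1))\<close>,
  so that \<open>(1 + \<eta>) * a = \<eta> powi i\<close>.\<close>

definition GPG_to_Omega :: "bool \<times> int \<Rightarrow> 'a^3^3" where
  "GPG_to_Omega v =
     Omega_elem (if fst v then u + 1 else u) (\<eta> powi (snd v - (if fst v then k + 1 else 0)))"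

lemma n_pos: "n > 0"
  using CARD_field_ge_2[where 'a = 'a] by (simp add: n_eq)

lemma eta_powi_eq_iff: "\<eta> powi i = \<eta> powi j \<longleftrightarrow> i mod int n = j mod int n"
  unfolding n_eq using primitive by (rule primitive_elem_power_int_eq_iff)

lemma GPG_to_Omega_outer: "GPG_to_Omega (False, i) = Omega_elem u (\<eta> powi i)"
  by (simp add: GPG_to_Omega_def)

lemma GPG_to_Omega_inner: "GPG_to_Omega (True, i) = Omega_elem (u + 1) (\<eta> powi (i - (k + 1)))"
  by (simp add: GPG_to_Omega_def)

lemma eta_powi_nonzero: "\<eta> powi i \<noteq> 0"
  using eta_nonzero by simp

lemma eta_mult_eta_powi: "\<eta> * \<eta> powi i = \<eta> powi (i + 1)"
  using eta_nonzero by (simp add: power_int_add_1')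

lemma one_plus_eta_mult_eta_powi: "(1 + \<eta>) * \<eta> powi (i - (k + 1)) = \<eta> powi i"
  using eta_nonzero by (simp add: one_plus_eta flip: power_int_add)

lemma eta_powi_eq_iff_dvd: "\<eta> powi i = \<eta> powi j \<longleftrightarrow> int n dvd i - j"
  by (simp add: eta_powi_eq_iff mod_eq_dvd_iff)

lemma ex_GPG_index:
  assumes "a \<noteq> 0"
  shows "\<exists>i\<in>{0..<int n}. \<eta> powi (i - s) = a"
proof -
  obtain m where "a = \<eta> ^ m"
    using primitive assms unfolding primitive_elem_def by blast
  then have "\<eta> powi ((int m + s) mod int n - s) = a"
    by (simp add: eta_powi_eq_iff mod_simps power_int_of_nat flip: power_int_of_nat)
  then show ?thesis
    using n_pos by (intro bexI[of _ "(int m + s) mod int n"]) simp_all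
qed

lemma eta_powi_shift_eq_imp_eq:
  assumes "i \<in> {0..<int n}" and "j \<in> {0..<int n}" and "\<eta> powi (i - s) = \<eta> powi (j - s)"
  shows "i = j"
proof -
  have "i = j mod int n"
    using assms(3) by (simp add: eta_powi_eq_iff_dvd eq_mod_iff_dvd_diff[OF assms(1)])
  then show "i = j"
    using assms(2) by (simp add: mod_pos_pos_trivial)
qed

lemma inj_on_GPG_to_Omega: "inj_on GPG_to_Omega (GPG_verts n)"
proof (rule inj_onI)
  fix v w
  assume "v \<in> GPG_verts n" and "w \<in> GPG_verts n" and eq: "GPG_to_Omega v = GPG_to_Omega w"
  obtain c i d j where v: "v = (c, i)" and w: "w = (d, j)"
    by fastforce
  have i: "i \<in> {0..<int n}" and j: "j \<in> {0..<int n}"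
    using \<open>v \<in> GPG_verts n\<close> \<open>w \<in> GPG_verts n\<close> by (auto simp: v w GPG_verts_def)
  from Omega_elem_eq_iff[OF eta_powi_nonzero] eq
  have "(if c then u + 1 else u) = (if d then u + 1 else u)"
    and "\<eta> powi (i - (if c then k + 1 else 0)) = \<eta> powi (j - (if d then k + 1 else 0))"
    unfolding v w GPG_to_Omega_def fst_conv snd_conv by simp_all
  then show "v = w"
    using eta_powi_shift_eq_imp_eq[OF i j, of 0] eta_powi_shift_eq_imp_eq[OF i j, of "k + 1"]
    by (auto simp: v w split: if_splits)
qed

lemma GPG_to_Omega_image: "GPG_to_Omega ` GPG_verts n = Omega q0 u \<union> Omega q0 (u + 1)"
proof
  have "GPG_to_Omega v \<in> Omega q0 (if fst v then u + 1 else u)" for v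
    unfolding GPG_to_Omega_def using eta_nonzero by (intro Omega_elem_in_Omega) simp
  then show "GPG_to_Omega ` GPG_verts n \<subseteq> Omega q0 u \<union> Omega q0 (u + 1)"
    by (smt (verit) UnCI image_subsetI)
  show "Omega q0 u \<union> Omega q0 (u + 1) \<subseteq> GPG_to_Omega ` GPG_verts n"
  proof
    fix x
    assume "x \<in> Omega q0 u \<union> Omega q0 (u + 1)"
    then obtain c a where "a \<noteq> 0" and x: "x = Omega_elem (if c then u + 1 else u) a"
      unfolding Omega_def by (smt (verit) Un_iff mem_Collect_eq)
    then obtain i where "i \<in> {0..<int n}" and "\<eta> powi (i - (if c then k + 1 else 0)) = a"
      using ex_GPG_index by blast
    then have "x = GPG_to_Omega (c, i)" and "(c, i) \<in> GPG_verts n"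
      by (simp_all add: x GPG_to_Omega_def GPG_verts_def)
    then show "x \<in> GPG_to_Omega ` GPG_verts n"
      by blast
  qed
qed

lemma bij_betw_GPG_to_Omega: "bij_betw GPG_to_Omega (GPG_verts n) (Omega q0 u \<union> Omega q0 (u + 1))"
  unfolding bij_betw_def using inj_on_GPG_to_Omega GPG_to_Omega_image ..

lemma Gamma_adj_outer_iff:
  assumes "i \<in> {0..<int n}" and "j \<in> {0..<int n}"
  shows "Gamma_adj q0 u (GPG_to_Omega (False, i)) (GPG_to_Omega (False, j)) \<longleftrightarrow>
    GPG_adj n k (False, i) (False, j)"
  unfolding GPG_to_Omega_outer Gamma_adj_u_u_iff[OF eta_powi_nonzero eta_powi_nonzero]
    eta_mult_eta_powi eta_powi_eq_iff_dvd GPG_adj_iff(1)[OF assms]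
    eq_mod_iff_dvd_diff[OF assms(1)] eq_mod_iff_dvd_diff[OF assms(2)] ..

lemma Gamma_adj_spoke_iff:
  assumes "i \<in> {0..<int n}" and "j \<in> {0..<int n}"
  shows "Gamma_adj q0 u (GPG_to_Omega (False, i)) (GPG_to_Omega (True, j)) \<longleftrightarrow>
      GPG_adj n k (False, i) (True, j)"
    and "Gamma_adj q0 u (GPG_to_Omega (True, i)) (GPG_to_Omega (False, j)) \<longleftrightarrow>
      GPG_adj n k (True, i) (False, j)"
proof -
  have "int n dvd i - j \<longleftrightarrow> i = j" and "int n dvd j - i \<longleftrightarrow> i = j"
    using eq_mod_iff_dvd_diff[OF assms(1), of j] eq_mod_iff_dvd_diff[OF assms(2), of i] assms
    by (auto simp: mod_pos_pos_trivial)
  then show "Gamma_adj q0 u (GPG_to_Omega (False, i)) (GPG_to_Omega (True, j)) \<longleftrightarrow>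
      GPG_adj n k (False, i) (True, j)"
    and "Gamma_adj q0 u (GPG_to_Omega (True, i)) (GPG_to_Omega (False, j)) \<longleftrightarrow>
      GPG_adj n k (True, i) (False, j)"
    unfolding GPG_to_Omega_outer GPG_to_Omega_inner GPG_adj_iff(3,4)[OF assms]
      Gamma_adj_u_u_succ_iff[OF eta_powi_nonzero eta_powi_nonzero]
      Gamma_adj_u_succ_u_iff[OF eta_powi_nonzero eta_powi_nonzero]
      one_plus_eta_mult_eta_powi eta_powi_eq_iff_dvd
    by simp_all
qed

lemma Gamma_adj_inner_iff:
  assumes "i \<in> {0..<int n}" and "j \<in> {0..<int n}"
  shows "Gamma_adj q0 u (GPG_to_Omega (True, i)) (GPG_to_Omega (True, j)) \<longleftrightarrow>
    GPG_adj n k (True, i) (True, j)"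
proof -
  have "int n dvd j - (i - (k + 1) + 1) \<longleftrightarrow> int n dvd i - (j + k)"
    and "int n dvd i - (j - (k + 1) + 1) \<longleftrightarrow> int n dvd j - (i + k)"
    by (subst dvd_diff_commute; simp add: algebra_simps)+
  then show ?thesis
    unfolding GPG_to_Omega_inner Gamma_adj_u_succ_u_succ_iff[OF eta_powi_nonzero eta_powi_nonzero]
      one_plus_eta_mult_eta_powi eta_mult_eta_powi eta_powi_eq_iff_dvd GPG_adj_iff(2)[OF assms]
      eq_mod_iff_dvd_diff[OF assms(1)] eq_mod_iff_dvd_diff[OF assms(2)]
    by blast
qed

lemma Gamma_adj_GPG_to_Omega_iff:
  assumes "v \<in> GPG_verts n" and "w \<in> GPG_verts n"
  shows "Gamma_adj q0 u (GPG_to_Omega v) (GPG_to_Omega w) \<longleftrightarrow> GPG_adj n k v w"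
proof -
  obtain c i d j where v: "v = (c, i)" and w: "w = (d, j)"
    by fastforce
  have "i \<in> {0..<int n}" and "j \<in> {0..<int n}"
    using assms by (auto simp: v w GPG_verts_def)
  then show ?thesis
    unfolding v w
    by (cases c; cases d) (simp_all only: Gamma_adj_outer_iff Gamma_adj_spoke_iff Gamma_adj_inner_iff)
qed

end

theorem proposition6p3:
  fixes u \<eta> :: "'a::{field,finite}" and f q0 :: nat and k :: int
  assumes "CARD('a) = 2 ^ f" and "f \<ge> 4"
    and "\<exists>e. q0 = 2 ^ e" and "q0 < CARD('a)"
    and "gcd (CARD('a) - 1) (q0 ^ 2 - 1) = 1"
    and "u \<in> Ucal q0"
    and "primitive_elem \<eta>" and "u = (1 + \<eta> ^ q0) / (\<eta> + \<eta> ^ q0)"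
    and "1 + \<eta> = \<eta> powi (k + 1)"
  shows "graph_iso (Omega q0 u \<union> Omega q0 (u + 1)) (Gamma_adj q0 u)
           (GPG_verts (CARD('a) - 1)) (GPG_adj (CARD('a) - 1) k)"
proof -
  obtain e where q0: "q0 = 2 ^ e"
    using assms(3) by blast
  have "q0 ^ 2 - 1 = (q0 - 1) * (q0 + 1)"
    by (simp add: power2_eq_square algebra_simps)
  then have "coprime (CARD('a) - 1) ((q0 - 1) * (q0 + 1))"
    using assms(5) by (simp only: coprime_iff_gcd_eq_1)
  then have coprime: "coprime (CARD('a) - 1) (q0 - 1)"
    by (rule coprime_mult_right_iff[THEN iffD1, THEN conjunct1])
  have "CARD('a) \<ge> 2 ^ 4"
    unfolding assms(1) using assms(2) by (rule power_increasing) simp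
  then have "\<eta> \<noteq> 1"
    using primitive_elem_power_eq_1_iff[OF assms(7), of 1] by auto
  interpret Gamma_GPG q0 e u \<eta> k "CARD('a) - 1"
    using CHAR_eq_2_if_card_eq_power_2[OF assms(1)] q0 coprime primitive_elem_nonzero[OF assms(7)]
      \<open>\<eta> \<noteq> 1\<close> assms(6-9)
    by unfold_locales (auto simp: Ucal_def)
  show ?thesis
    using bij_betw_GPG_to_Omega Gamma_adj_GPG_to_Omega_iff by (rule graph_isoI_inverse)
qed

end
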